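(* Let $N\ge2$, $\gamma\in(0,1)$, and let $\{(Q_i,\mathcal D_i)\}_{i=1}^M$ be an ID code with deterministic decoders for $\mathrm{NL}_{[N]}$ with error probabilities $\lambda_{i\to j}$ ($i\ne j$) and $\lambda_{i\not\to i}$. Then there exist nonempty sets $\mathcal U_i\subseteq[N]$, $i=1,\dots,M$, such that the ID code $\{(\mathcal U_i,\mathcal D_i)\}_{i=1}^M$ (message $i$ encoded uniformly on $\mathcal U_i$) has error probabilities $\tilde\lambda_{i\to j}\le\lambda_{i\to j}\cdot\frac{(1+2\gamma)N^{\gamma}}{\gamma(1-N^{-\gamma})}$ for all $i\ne j$ and $\tilde\lambda_{i\not\to i}\le\lambda_{i\not\to i}\cdot\frac{(1+2\gamma)N^{\gamma}}{\gamma(1-N^{-\gamma})}$ for all $i$.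
   Context: $\mathrm{NL}_{[N]}$ is the noiseless channel with input and output alphabet $[N]=\{1,\dots,N\}$. An ID code with deterministic decoders for $\mathrm{NL}_{[N]}$ is a family $\{(Q_i,\mathcal D_i)\}_{i=1}^M$ with $Q_i$ a probability distribution on $[N]$ and $\mathcal D_i\subseteq[N]$; its error probabilities are $\lambda_{i\to j}=Q_i(\mathcal D_j)$ for $i\ne j$ and $\lambda_{i\not\to i}=Q_i([N]\setminus\mathcal D_i)$. For nonempty $\mathcal U_i\subseteq[N]$, the code $\{(\mathcal U_i,\mathcal D_i)\}$ denotes the code in which $Q_i$ is the uniform distribution on $\mathcal U_i$. *)

theory Defs
  imports "HOL-Analysis.Analysis"
begin

definition is_distr :: "nat \<Rightarrow> (nat \<Rightarrow> real) \<Rightarrow> bool" where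
  "is_distr N P \<longleftrightarrow> (\<forall>x\<in>{1..N}. P x \<ge> 0) \<and> (\<forall>x. x \<notin> {1..N} \<longrightarrow> P x = 0)
                       \<and> (\<Sum>x\<in>{1..N}. P x) = 1"

definition is_ID_code :: "nat \<Rightarrow> nat \<Rightarrow> (nat \<Rightarrow> nat \<Rightarrow> real) \<Rightarrow> (nat \<Rightarrow> nat set) \<Rightarrow> bool" where
  "is_ID_code N M Q D \<longleftrightarrow> (\<forall>i\<in>{1..M}. is_distr N (Q i) \<and> D i \<subseteq> {1..N})"

definition prob_of :: "nat \<Rightarrow> (nat \<Rightarrow> real) \<Rightarrow> nat set \<Rightarrow> real" where
  "prob_of N P A = (\<Sum>x\<in>{1..N} \<inter> A. P x)"

definition err_cross :: "nat \<Rightarrow> (nat \<Rightarrow> nat \<Rightarrow> real) \<Rightarrow> (nat \<Rightarrow> nat set) \<Rightarrow> nat \<Rightarrow> nat \<Rightarrow> real" where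
  "err_cross N Q D i j = prob_of N (Q i) (D j)"

definition err_miss :: "nat \<Rightarrow> (nat \<Rightarrow> nat \<Rightarrow> real) \<Rightarrow> (nat \<Rightarrow> nat set) \<Rightarrow> nat \<Rightarrow> real" where
  "err_miss N Q D i = prob_of N (Q i) ({1..N} - D i)"

definition unif :: "nat set \<Rightarrow> nat \<Rightarrow> real" where
  "unif U x = (if x \<in> U then 1 / real (card U) else 0)"

end

theory Submission
  imports Defs "HOL-Analysis.Harmonic_Numbers"
begin

text \<open>Rank the points of [N] by decreasing probability under Q. If x0 maximises
  Q x \<cdot> rank x, then 1 = \<Sum>x. Q x \<le> Q x0 \<cdot> rank x0 \<cdot> \<Sum>x. 1 / rank x \<le> Q x0 \<cdot> rank x0 \<cdot> H N.
  Encoding uniformly on the rank x0 points of probability at least Q x0 therefore inflates the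
  probability of any set by at most the harmonic number H N \<le> 1 + ln N, which is below the
  stated constant.\<close>

definition rank :: "'a set \<Rightarrow> ('a \<Rightarrow> real) \<Rightarrow> 'a \<Rightarrow> nat" where
  "rank S P x = card {y\<in>S. P x \<le> P y}"

lemma rank_pos: "finite S \<Longrightarrow> x \<in> S \<Longrightarrow> rank S P x > 0"
  unfolding rank_def by (subst card_gt_0_iff) auto

lemma sum_inverse_rank_le_harm:
  assumes "finite S"
  shows "(\<Sum>x\<in>S. 1 / real (rank S P x)) \<le> harm (card S)"
  using assms
proof (induction "card S" arbitrary: S)
  case 0
  then show ?case by (simp add: harm_def)
next
  case (Suc n)
  then have "S \<noteq> {}" by auto
  then obtain x0 where x0: "x0 \<in> S" "\<forall>y\<in>S. P x0 \<le> P y"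
    using Min_in[of "P ` S"] Min_le[of "P ` S"] Suc.prems by fastforce
  let ?T = "S - {x0}"
  have "{y\<in>S. P x0 \<le> P y} = S" using x0 by auto
  then have rank_x0: "rank S P x0 = Suc n" using Suc.hyps by (simp add: rank_def)
  have T: "finite ?T" "n = card ?T" using Suc x0 by auto
  have "1 / real (rank S P y) \<le> 1 / real (rank ?T P y)" if "y \<in> ?T" for y
  proof -
    have "rank ?T P y \<le> rank S P y"
      unfolding rank_def by (rule card_mono) (use Suc.prems in auto)
    then show ?thesis using rank_pos[OF T(1) that] by (simp add: frac_le)
  qed
  then have "(\<Sum>x\<in>?T. 1 / real (rank S P x)) \<le> (\<Sum>x\<in>?T. 1 / real (rank ?T P x))"
    by (rule sum_mono)
  also have "\<dots> \<le> harm n" using Suc.hyps(1)[OF T(2) T(1)] T(2) by simp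
  moreover have "harm (card S) = 1 / real (Suc n) + harm n"
    using Suc.hyps(2)[symmetric] by (simp add: harm_Suc field_simps)
  ultimately show ?case
    using Suc.prems Suc.hyps(2) x0(1) rank_x0 by (simp add: sum.remove)
qed

lemma exists_rank_mass_ge_inverse_harm:
  fixes P :: "'a \<Rightarrow> real"
  assumes "finite S" and "\<forall>x\<in>S. 0 \<le> P x" and "sum P S = 1"
  obtains x where "x \<in> S" and "1 \<le> P x * real (rank S P x) * harm (card S)"
proof -
  define f where "f x = P x * real (rank S P x)" for x
  have "S \<noteq> {}" using assms(3) by auto
  then obtain x0 where x0: "x0 \<in> S" "\<forall>y\<in>S. f y \<le> f x0"
    using Max_in[of "f ` S"] Max_ge[of "f ` S"] assms(1) by fastforce
  have "f x0 \<ge> 0" using assms(2) x0(1) by (simp add: f_def)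
  have "1 = (\<Sum>x\<in>S. f x * (1 / real (rank S P x)))"
    using assms(3) rank_pos[OF assms(1)] by (simp add: f_def)
  also have "\<dots> \<le> (\<Sum>x\<in>S. f x0 * (1 / real (rank S P x)))"
    using x0(2) by (intro sum_mono mult_right_mono) auto
  also have "\<dots> = f x0 * (\<Sum>x\<in>S. 1 / real (rank S P x))"
    by (simp add: sum_distrib_left)
  also have "\<dots> \<le> f x0 * harm (card S)"
    using sum_inverse_rank_le_harm[OF assms(1), of P] \<open>f x0 \<ge> 0\<close> by (rule mult_left_mono)
  finally show ?thesis using that x0(1) by (simp add: f_def)
qed

lemma prob_of_nonneg: "is_distr N P \<Longrightarrow> prob_of N P A \<ge> 0"
  unfolding is_distr_def prob_of_def by (intro sum_nonneg) auto

lemma prob_of_unif: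
  assumes "U \<subseteq> {1..N}"
  shows "prob_of N (unif U) A = real (card (U \<inter> A)) / real (card U)"
proof -
  have "{1..N} \<inter> A \<inter> U = U \<inter> A" using assms by auto
  then show ?thesis
    unfolding prob_of_def unif_def by (subst sum.If_cases) simp_all
qed

lemma card_upper_level_set_mass_le:
  assumes "is_distr N P"
  shows "real (card ({y\<in>{1..N}. t \<le> P y} \<inter> A)) * t \<le> prob_of N P A"
proof -
  let ?U = "{y\<in>{1..N}. t \<le> P y}"
  have "real (card (?U \<inter> A)) * t = (\<Sum>x\<in>?U \<inter> A. t)" by simp
  also have "\<dots> \<le> (\<Sum>x\<in>?U \<inter> A. P x)" by (intro sum_mono) auto
  also have "\<dots> \<le> (\<Sum>x\<in>{1..N} \<inter> A. P x)"
    using assms by (intro sum_mono2) (auto simp: is_distr_def)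
  finally show ?thesis by (simp add: prob_of_def)
qed

lemma exists_uniform_dominated_by_harm:
  assumes "N \<ge> 1" and "is_distr N P"
  obtains U where "U \<noteq> {}" and "U \<subseteq> {1..N}"
    and "\<And>A. prob_of N (unif U) A \<le> prob_of N P A * harm N"
proof -
  have P: "\<forall>x\<in>{1..N}. 0 \<le> P x" "sum P {1..N} = 1"
    using assms(2) by (auto simp: is_distr_def)
  obtain x0 where x0: "x0 \<in> {1..N}" and mass: "1 \<le> P x0 * real (rank {1..N} P x0) * harm N"
    using exists_rank_mass_ge_inverse_harm[OF _ P] by auto
  define U where "U = {y\<in>{1..N}. P x0 \<le> P y}"
  have U: "x0 \<in> U" "U \<subseteq> {1..N}" using x0 by (auto simp: U_def)
  have card_U: "card U = rank {1..N} P x0" by (simp add: U_def rank_def)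
  have "P x0 \<noteq> 0" using mass by (metis mult_zero_left not_one_le_zero)
  then have "P x0 > 0" using P(1) x0 by force
  moreover have "card U > 0" using rank_pos[of "{1..N}" x0 P] x0 card_U by simp
  ultimately have pos: "P x0 * real (card U) > 0" by simp
  have "prob_of N (unif U) A \<le> prob_of N P A * harm N" for A
  proof -
    have "prob_of N (unif U) A = real (card (U \<inter> A)) * P x0 / (P x0 * real (card U))"
      using prob_of_unif[OF U(2)] \<open>P x0 \<noteq> 0\<close> by simp
    also have "\<dots> \<le> prob_of N P A / (P x0 * real (card U))"
      using card_upper_level_set_mass_le[OF assms(2)] pos unfolding U_def
      by (intro divide_right_mono) auto
    also have "\<dots> = prob_of N P A * (1 / (P x0 * real (card U)))" by simp
    also have "\<dots> \<le> prob_of N P A * harm N"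
    proof (rule mult_left_mono)
      show "1 / (P x0 * real (card U)) \<le> harm N"
        using mass pos card_U by (simp add: divide_le_eq mult.commute)
    qed (rule prob_of_nonneg[OF assms(2)])
    finally show ?thesis .
  qed
  then show ?thesis using that U by blast
qed

lemma harm_le_powr_bound:
  fixes \<gamma> :: real
  assumes "N \<ge> 2" and "0 < \<gamma>" and "\<gamma> < 1"
  shows "harm N \<le> (1 + 2 * \<gamma>) * real N powr \<gamma> / (\<gamma> * (1 - real N powr (- \<gamma>)))"
proof -
  define L where "L = ln (real N)"
  have "harm N \<le> 1 + L"
    using euler_mascheroni_sequence_decreasing[of 1 N] assms(1) by (simp add: harm_def L_def)
  have "1 + \<gamma> * L \<le> real N powr \<gamma>"
    using assms(1) exp_ge_add_one_self[of "\<gamma> * L"] by (simp add: powr_def L_def)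
  have "0 < real N powr (- \<gamma>)" "real N powr (- \<gamma>) < 1"
    using assms by (auto intro: powr_less_one)
  then have d: "0 < \<gamma> * (1 - real N powr (- \<gamma>))" "\<gamma> * (1 - real N powr (- \<gamma>)) \<le> \<gamma>"
    using assms(2) by (auto simp: mult_left_le)
  have "1 + L \<le> (1 + \<gamma> * L) / \<gamma>" using assms(2,3) by (simp add: field_simps)
  also have "\<dots> \<le> real N powr \<gamma> / \<gamma>"
    using \<open>1 + \<gamma> * L \<le> _\<close> assms(2) by (simp add: divide_right_mono)
  also have "\<dots> \<le> (1 + 2 * \<gamma>) * real N powr \<gamma> / \<gamma>"
    using assms(2) by (intro divide_right_mono) (simp_all add: algebra_simps)
  also have "\<dots> \<le> (1 + 2 * \<gamma>) * real N powr \<gamma> / (\<gamma> * (1 - real N powr (- \<gamma>)))"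
    using d assms(2) by (intro divide_left_mono) auto
  finally show ?thesis using \<open>harm N \<le> 1 + L\<close> by linarith
qed

theorem lemma3:
  fixes N M :: nat and \<gamma> :: real
    and Q :: "nat \<Rightarrow> nat \<Rightarrow> real" and D :: "nat \<Rightarrow> nat set"
  assumes "N \<ge> 2" and "0 < \<gamma>" and "\<gamma> < 1"
    and "is_ID_code N M Q D"
  shows "\<exists>U :: nat \<Rightarrow> nat set.
     (\<forall>i\<in>{1..M}. U i \<noteq> {} \<and> U i \<subseteq> {1..N}) \<and>
     (let Q' = (\<lambda>i. unif (U i));
          c = (1 + 2 * \<gamma>) * real N powr \<gamma> / (\<gamma> * (1 - real N powr (- \<gamma>)))
      in (\<forall>i\<in>{1..M}. \<forall>j\<in>{1..M}. i \<noteq> j \<longrightarrow>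
             err_cross N Q' D i j \<le> err_cross N Q D i j * c) \<and>
         (\<forall>i\<in>{1..M}. err_miss N Q' D i \<le> err_miss N Q D i * c))"
proof -
  define c where "c = (1 + 2 * \<gamma>) * real N powr \<gamma> / (\<gamma> * (1 - real N powr (- \<gamma>)))"
  have "harm N \<le> c" unfolding c_def using assms(1-3) by (rule harm_le_powr_bound)
  have "\<forall>i\<in>{1..M}. \<exists>U. U \<noteq> {} \<and> U \<subseteq> {1..N} \<and>
          (\<forall>A. prob_of N (unif U) A \<le> prob_of N (Q i) A * c)"
  proof
    fix i assume "i \<in> {1..M}"
    then have Qi: "is_distr N (Q i)" using assms(4) by (simp add: is_ID_code_def)
    obtain U where "U \<noteq> {}" "U \<subseteq> {1..N}"
      and "\<And>A. prob_of N (unif U) A \<le> prob_of N (Q i) A * harm N"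
      using exists_uniform_dominated_by_harm[OF _ Qi] assms(1) by auto
    moreover have "prob_of N (Q i) A * harm N \<le> prob_of N (Q i) A * c" for A
      using \<open>harm N \<le> c\<close> prob_of_nonneg[OF Qi] by (rule mult_left_mono)
    ultimately show "\<exists>U. U \<noteq> {} \<and> U \<subseteq> {1..N} \<and>
        (\<forall>A. prob_of N (unif U) A \<le> prob_of N (Q i) A * c)"
      by (meson order_trans)
  qed
  then obtain U where "\<forall>i\<in>{1..M}. U i \<noteq> {} \<and> U i \<subseteq> {1..N} \<and>
      (\<forall>A. prob_of N (unif (U i)) A \<le> prob_of N (Q i) A * c)"
    by metis
  then show ?thesis
    unfolding Let_def err_cross_def err_miss_def c_def[symmetric]
    by (intro exI[of _ U]) auto
qed

end
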